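(* In the setting of streaming $k$-PCA (below), fix $t\in\mathbb{N}$ and $\eta_t\ge0$, and suppose $V^\top W_{t-1}$ is invertible and $1+\eta_t a_t\neq0$, where $$Y_s=Z^\top W_s(V^\top W_s)^{-1},\quad a_t=\mathbf{x}_t^\top W_{t-1}(V^\top W_{t-1})^{-1}V^\top\mathbf{x}_t,$$ $$B_t=V^\top\mathbf{x}_t\mathbf{x}_t^\top W_{t-1}(V^\top W_{t-1})^{-1},\quad C_t=Z^\top\mathbf{x}_t\mathbf{x}_t^\top W_{t-1}(V^\top W_{t-1})^{-1}.$$ Then $V^\top W_t$ is invertible and, with $X_s=\|Y_s\|_F^2$, $$X_t\le(1-2\eta_t\,\mathsf{gap})X_{t-1}+N_t,$$ where $$N_t=2\eta_t\big(-\mathrm{tr}(Y_{t-1}^\top Y_{t-1}B_t)+\mathbb{E}[\mathrm{tr}(Y_{t-1}^\top Y_{t-1}B_t)\mid\mathcal{F}_{t-1}]+\mathrm{tr}(Y_{t-1}^\top C_t)-\mathbb{E}[\mathrm{tr}(Y_{t-1}^\top C_t)\mid\mathcal{F}_{t-1}]\big)$$ $$+\frac{2\eta_t^2a_t}{1+\eta_ta_t}\big(\mathrm{tr}(Y_{t-1}^\top Y_{t-1}B_t)-\mathrm{tr}(Y_{t-1}^\top C_t)\big)+\frac{2\eta_t^2}{(1+\eta_ta_t)^2}\big(\|Y_{t-1}B_t\|_F^2+\|C_t\|_F^2\big).$$ Consequently, if these hypotheses hold for all $t>T_0$ and $0<1-2\eta_t\mathsf{gap}$ for all $t>T_0$,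 then for all $t>T_0$, $$X_t\le\prod_{t'=T_0+1}^{t}(1-2\eta_{t'}\mathsf{gap})\,(X_{T_0}+M_t),\qquad M_t=\sum_{t'=T_0+1}^{t}\Big(\prod_{t''=T_0+1}^{t'}(1-2\eta_{t''}\mathsf{gap})\Big)^{-1}N_{t'}.$$
   Context: Setting: $\mathcal{D}$ is a distribution on the unit sphere of $\mathbb{R}^n$ with covariance $\Sigma=\mathbb{E}[\mathbf{x}\mathbf{x}^\top]$, eigenvalues $\lambda_1\ge\dots\ge\lambda_n\ge0$, $1\le k<n$, $\mathsf{gap}=\lambda_k-\lambda_{k+1}$. $V\in\mathbb{R}^{n\times k}$ (resp. $Z\in\mathbb{R}^{n\times(n-k)}$) has orthonormal columns spanning the eigenspace of $\Sigma$ for $\lambda_1,\dots,\lambda_k$ (resp. $\lambda_{k+1},\dots,\lambda_n$). $\mathbf{x}_1,\mathbf{x}_2,\dots$ are i.i.d. from $\mathcal{D}$, $W_0\in\mathbb{R}^{n\times k}$, and Oja's update is $W_t=(I+\eta_t\mathbf{x}_t\mathbf{x}_t^\top)W_{t-1}$ with deterministic $\eta_t$. $\mathcal{F}_{t-1}$ is the $\sigma$-algebra generated by $\mathbf{x}_1,\dots,\mathbf{x}_{t-1}$. $\mathrm{tr}$ is the trace and $\|\cdot\|_F$ the Frobenius norm. *)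

theory Defs
  imports "HOL-Analysis.Analysis" "HOL-Probability.Probability"
begin

text \<open>Matrices are Cartesian-space matrices: an r x c real matrix has type real^'c^'r.\<close>

definition outer :: "real^'n \<Rightarrow> real^'m \<Rightarrow> real^'m^'n" where
  "outer u w = (\<chi> i j. u $ i * w $ j)"

definition second_moment :: "(real^'n) measure \<Rightarrow> real^'n^'n" where
  "second_moment D = (\<chi> i j. \<integral>y. y $ i * y $ j \<partial>D)"

primrec oja :: "real^'k^'n \<Rightarrow> (nat \<Rightarrow> real) \<Rightarrow> (nat \<Rightarrow> real^'n) \<Rightarrow> nat \<Rightarrow> real^'k^'n" where
  "oja W0 eta xs 0 = W0"
| "oja W0 eta xs (Suc t) =
     (mat 1 + eta (Suc t) *\<^sub>R outer (xs (Suc t)) (xs (Suc t))) ** oja W0 eta xs t"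

definition Ymat :: "real^'k^'n \<Rightarrow> real^'m^'n \<Rightarrow> real^'k^'n \<Rightarrow> real^'k^'m" where
  "Ymat V Z W = transpose Z ** W ** matrix_inv (transpose V ** W)"

definition acoef :: "real^'k^'n \<Rightarrow> real^'k^'n \<Rightarrow> real^'n \<Rightarrow> real" where
  "acoef V W xv = xv \<bullet> ((W ** matrix_inv (transpose V ** W)) *v (transpose V *v xv))"

definition Bmat :: "real^'k^'n \<Rightarrow> real^'k^'n \<Rightarrow> real^'n \<Rightarrow> real^'k^'k" where
  "Bmat V W xv = transpose V ** outer xv xv ** W ** matrix_inv (transpose V ** W)"

definition Cmat :: "real^'k^'n \<Rightarrow> real^'m^'n \<Rightarrow> real^'k^'n \<Rightarrow> real^'n \<Rightarrow> real^'k^'m" where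
  "Cmat V Z W xv = transpose Z ** outer xv xv ** W ** matrix_inv (transpose V ** W)"

text \<open>The sigma-algebra generated by x_1, ..., x_s (as a sub-measure of P, as required by
  real_cond_exp); for s = 0 it is the trivial sigma-algebra.\<close>
definition gen_filt :: "'w measure \<Rightarrow> (nat \<Rightarrow> 'w \<Rightarrow> real^'n) \<Rightarrow> nat \<Rightarrow> 'w measure" where
  "gen_filt P x s = sigma (space P) {x i -` A \<inter> space P | i A. i \<in> {1..s} \<and> A \<in> sets borel}"

definition Wrv :: "real^'k^'n \<Rightarrow> (nat \<Rightarrow> real) \<Rightarrow> (nat \<Rightarrow> 'w \<Rightarrow> real^'n) \<Rightarrow> nat \<Rightarrow> 'w \<Rightarrow> real^'k^'n" where
  "Wrv W0 eta x t \<omega> = oja W0 eta (\<lambda>s. x s \<omega>) t"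

text \<open>X_t = ||Y_t||_F^2 (the norm on real^'k^'m is the Frobenius norm).\<close>
definition Xrv :: "real^'k^'n \<Rightarrow> real^'m^'n \<Rightarrow> real^'k^'n \<Rightarrow> (nat \<Rightarrow> real) \<Rightarrow> (nat \<Rightarrow> 'w \<Rightarrow> real^'n) \<Rightarrow> nat \<Rightarrow> 'w \<Rightarrow> real" where
  "Xrv V Z W0 eta x t \<omega> = (norm (Ymat V Z (Wrv W0 eta x t \<omega>)))\<^sup>2"

definition trYYB :: "real^'k^'n \<Rightarrow> real^'m^'n \<Rightarrow> real^'k^'n \<Rightarrow> (nat \<Rightarrow> real) \<Rightarrow> (nat \<Rightarrow> 'w \<Rightarrow> real^'n) \<Rightarrow> nat \<Rightarrow> 'w \<Rightarrow> real" where
  "trYYB V Z W0 eta x t \<omega> =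
     (let Wp = Wrv W0 eta x (t - 1) \<omega>; Yp = Ymat V Z Wp
      in trace (transpose Yp ** Yp ** Bmat V Wp (x t \<omega>)))"

definition trYC :: "real^'k^'n \<Rightarrow> real^'m^'n \<Rightarrow> real^'k^'n \<Rightarrow> (nat \<Rightarrow> real) \<Rightarrow> (nat \<Rightarrow> 'w \<Rightarrow> real^'n) \<Rightarrow> nat \<Rightarrow> 'w \<Rightarrow> real" where
  "trYC V Z W0 eta x t \<omega> =
     (let Wp = Wrv W0 eta x (t - 1) \<omega>; Yp = Ymat V Z Wp
      in trace (transpose Yp ** Cmat V Z Wp (x t \<omega>)))"

definition Nrv :: "'w measure \<Rightarrow> real^'k^'n \<Rightarrow> real^'m^'n \<Rightarrow> real^'k^'n \<Rightarrow> (nat \<Rightarrow> real) \<Rightarrow> (nat \<Rightarrow> 'w \<Rightarrow> real^'n) \<Rightarrow> nat \<Rightarrow> 'w \<Rightarrow> real" where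
  "Nrv P V Z W0 eta x t \<omega> =
     (let Wp = Wrv W0 eta x (t - 1) \<omega>; Yp = Ymat V Z Wp;
          a = acoef V Wp (x t \<omega>); B = Bmat V Wp (x t \<omega>); C = Cmat V Z Wp (x t \<omega>);
          f1 = trYYB V Z W0 eta x t; f2 = trYC V Z W0 eta x t;
          F = gen_filt P x (t - 1)
      in 2 * eta t * (- f1 \<omega> + real_cond_exp P F f1 \<omega> + f2 \<omega> - real_cond_exp P F f2 \<omega>)
         + 2 * (eta t)\<^sup>2 * a / (1 + eta t * a) * (f1 \<omega> - f2 \<omega>)
         + 2 * (eta t)\<^sup>2 / (1 + eta t * a)\<^sup>2 * ((norm (Yp ** B))\<^sup>2 + (norm C)\<^sup>2))"

end

theory Submission
  imports Defs
begin

(* Along a sample path, one Oja step multiplies V^T W by I + eta B_t, and B_t^2 = a_t B_t, so its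
   inverse is I - c B_t with c = eta / (1 + eta a_t); hence Y_t = Y + c (C_t - Y B_t) with
   Y = Y_{t-1}. Expanding the squared Frobenius norm and using |C - Y B|^2 <= 2 (|Y B|^2 + |C|^2),
     X_t <= X_{t-1} + 2 c (tr(Y^T C_t) - tr(Y^T Y B_t)) + 2 c^2 (|Y B_t|^2 + |C_t|^2),
   where 2 c = 2 eta - 2 eta^2 a_t / (1 + eta a_t). Since x_t is independent of F_{t-1} and W_{t-1}
   is F_{t-1}-measurable, the conditional expectation of the first-order term is the integral over
   D with W_{t-1} frozen. As E[x x^T] = Sigma, V^T Sigma = Lambda_V V^T and Z^T Sigma = Lambda_Z Z^T,
   it equals 2 eta (tr(Y^T Lambda_Z Y) - tr(Y^T Y Lambda_V)) <= -2 eta gap X_{t-1}. Unrolling the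
   resulting linear recursion, whose coefficients are positive, gives the second claim. *)

section \<open>Measurability of matrix operations\<close>

lemma borel_measurable_vec_nth[measurable]:
  "(\<lambda>v::'a::euclidean_space^'n. v $ i) \<in> borel_measurable borel"
  by (intro borel_measurable_continuous_onI continuous_intros)

lemma borel_measurable_vec_componentwise:
  fixes f :: "'w \<Rightarrow> 'a::euclidean_space^'n"
  assumes "\<And>i. (\<lambda>\<omega>. f \<omega> $ i) \<in> borel_measurable M"
  shows "f \<in> borel_measurable M"
proof (subst borel_measurable_euclidean_space, intro ballI)
  fix b :: "'a^'n" assume "b \<in> Basis"
  then obtain i u where b: "b = axis i u" "u \<in> Basis" unfolding Basis_vec_def by auto
  have "(\<lambda>\<omega>. f \<omega> $ i \<bullet> u) \<in> borel_measurable M"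
    using assms[of i] by measurable
  then show "(\<lambda>\<omega>. f \<omega> \<bullet> b) \<in> borel_measurable M" by (simp add: b inner_axis)
qed

lemma borel_measurable_matrix_matrix_mult[measurable (raw)]:
  fixes f :: "'w \<Rightarrow> real^'k^'n" and g :: "'w \<Rightarrow> real^'m^'k"
  assumes [measurable]: "f \<in> borel_measurable M" "g \<in> borel_measurable M"
  shows "(\<lambda>\<omega>. f \<omega> ** g \<omega>) \<in> borel_measurable M"
  by (intro borel_measurable_vec_componentwise) (simp add: matrix_matrix_mult_def)

lemma borel_measurable_transpose[measurable (raw)]:
  fixes f :: "'w \<Rightarrow> real^'k^'n"
  assumes [measurable]: "f \<in> borel_measurable M"
  shows "(\<lambda>\<omega>. transpose (f \<omega>)) \<in> borel_measurable M"
  by (intro borel_measurable_vec_componentwise) (simp add: transpose_def)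

lemma borel_measurable_outer[measurable (raw)]:
  fixes f :: "'w \<Rightarrow> real^'n" and g :: "'w \<Rightarrow> real^'m"
  assumes [measurable]: "f \<in> borel_measurable M" "g \<in> borel_measurable M"
  shows "(\<lambda>\<omega>. outer (f \<omega>) (g \<omega>)) \<in> borel_measurable M"
  by (intro borel_measurable_vec_componentwise) (simp add: outer_def)

lemma borel_measurable_det[measurable (raw)]:
  fixes f :: "'w \<Rightarrow> real^'k^'k"
  assumes [measurable]: "f \<in> borel_measurable M"
  shows "(\<lambda>\<omega>. det (f \<omega>)) \<in> borel_measurable M"
  unfolding det_def by measurable

lemma borel_measurable_trace[measurable (raw)]:
  fixes f :: "'w \<Rightarrow> real^'k^'k"
  assumes [measurable]: "f \<in> borel_measurable M"
  shows "(\<lambda>\<omega>. trace (f \<omega>)) \<in> borel_measurable M"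
  unfolding trace_def by measurable

lemma matrix_inv_right:
  assumes "invertible A"
  shows "A ** matrix_inv A = mat 1"
  using someI_ex[OF assms[unfolded invertible_def]] unfolding matrix_inv_def by blast

lemma matrix_inv_left:
  assumes "invertible A"
  shows "matrix_inv A ** A = mat 1"
  using someI_ex[OF assms[unfolded invertible_def]] unfolding matrix_inv_def by blast

lemma matrix_inv_unique:
  fixes A :: "'a::comm_semiring_1^'n^'m"
  assumes "A ** A' = mat 1" "A' ** A = mat 1"
  shows "matrix_inv A = A'"
proof -
  have "invertible A" using assms unfolding invertible_def by blast
  have "matrix_inv A = matrix_inv A ** (A ** A')" by (simp add: assms)
  also have "\<dots> = A'"
    by (simp add: matrix_mul_assoc matrix_inv_left[OF \<open>invertible A\<close>])
  finally show ?thesis .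
qed

text \<open>On singular matrices \<^const>\<open>matrix_inv\<close> is the junk value chosen by \<open>SOME\<close> from an empty
  predicate, the same for all of them.\<close>
lemma matrix_inv_not_invertible:
  assumes "\<not> invertible A" "\<not> invertible B"
  shows "matrix_inv A = matrix_inv B"
proof -
  have "(\<lambda>A'. A ** A' = mat 1 \<and> A' ** A = mat 1) = (\<lambda>A'. B ** A' = mat 1 \<and> A' ** B = mat 1)"
    using assms unfolding invertible_def by auto
  then show ?thesis unfolding matrix_inv_def by simp
qed

lemma matrix_inv_cramer:
  fixes A :: "real^'k^'k"
  assumes "det A \<noteq> 0"
  shows "matrix_inv A = (\<chi> i j. det (\<chi> r c. if c = i then (if r = j then 1 else 0) else A$r$c) / det A)"
proof -
  have inv: "invertible A" using assms invertible_det_nz by blast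
  have "matrix_inv A $ i $ j = det (\<chi> r c. if c = i then (if r = j then 1 else 0) else A$r$c) / det A"
    for i j
  proof -
    have "A *v (matrix_inv A *v axis j 1) = axis j 1"
      by (simp add: matrix_vector_mul_assoc matrix_inv_right[OF inv])
    then have "(matrix_inv A *v axis j 1) $ i
        = det (\<chi> r c. if c = i then (axis j 1 :: real^'k) $ r else A$r$c) / det A"
      using cramer[OF assms] by simp
    moreover have "(matrix_inv A *v axis j 1) $ i = matrix_inv A $ i $ j"
      by (simp add: matrix_vector_mult_def axis_def if_distrib cong: if_cong)
    moreover have axis: "(axis j 1 :: real^'k) $ r = (if r = j then 1 else 0)" for r
      by (simp add: axis_def)
    ultimately show ?thesis by (simp only: axis)
  qed
  then show ?thesis by (simp add: vec_eq_iff)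
qed

lemma not_invertible_zero_matrix: "\<not> invertible (0::real^'k^'n)"
proof
  assume "invertible (0::real^'k^'n)"
  then have "(mat 1 :: real^'n^'n) = 0" unfolding invertible_def by auto
  then have "(mat 1 :: real^'n^'n) $ undefined $ undefined = 0" by simp
  then show False by (simp add: mat_def)
qed

lemma borel_measurable_matrix_inv[measurable (raw)]:
  fixes f :: "'w \<Rightarrow> real^'k^'k"
  assumes [measurable]: "f \<in> borel_measurable M"
  shows "(\<lambda>\<omega>. matrix_inv (f \<omega>)) \<in> borel_measurable M"
proof -
  have eq: "matrix_inv (f \<omega>) = (if det (f \<omega>) = 0 then matrix_inv 0
      else (\<chi> i j. det (\<chi> r c. if c = i then (if r = j then 1 else 0) else f \<omega> $r$c) / det (f \<omega>)))"
    for \<omega>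
  proof (cases "det (f \<omega>) = 0")
    case True
    then show ?thesis
      by (simp, intro matrix_inv_not_invertible not_invertible_zero_matrix)
        (simp add: invertible_det_nz)
  qed (simp add: matrix_inv_cramer)
  have [measurable]: "(\<lambda>\<omega>. det (\<chi> r c. if c = i then (if r = j then 1 else 0) else f \<omega> $r$c))
      \<in> borel_measurable M" for i j
    by (intro borel_measurable_det borel_measurable_vec_componentwise) simp
  show ?thesis
    unfolding eq by (intro measurable_If borel_measurable_vec_componentwise) simp_all
qed

section \<open>One step of Oja's iteration\<close>

lemma matrix_add_rdistrib: "((A::'a::semiring_1^'k^'n) + B) ** C = A ** C + B ** C"
  by (vector matrix_matrix_mult_def sum.distrib[symmetric] field_simps)

lemma matrix_diff_ldistrib: "(A::'a::ring_1^'k^'n) ** (B - C) = A ** B - A ** C"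
  by (vector matrix_matrix_mult_def sum_subtractf[symmetric] field_simps)

lemma matrix_diff_rdistrib: "((A::'a::ring_1^'k^'n) - B) ** C = A ** C - B ** C"
  by (vector matrix_matrix_mult_def sum_subtractf[symmetric] field_simps)

lemma matrix_scaleR_left: "(c *\<^sub>R (A::real^'k^'n)) ** B = c *\<^sub>R (A ** B)"
  by (simp add: scalar_matrix_assoc)

lemma matrix_scaleR_right: "(A::real^'k^'n) ** (c *\<^sub>R B) = c *\<^sub>R (A ** B)"
  by (simp add: matrix_scalar_ac scalar_matrix_assoc)

lemmas matrix_algebra_simps =
  matrix_add_ldistrib matrix_add_rdistrib matrix_diff_ldistrib matrix_diff_rdistrib
  matrix_scaleR_left matrix_scaleR_right

lemma outer_mult_mult_outer:
  fixes u :: "real^'n" and v w :: "real^'k" and z :: "real^'m" and K :: "real^'k^'k"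
  shows "outer u v ** K ** outer w z = (v \<bullet> (K *v w)) *\<^sub>R outer u z"
proof -
  have "(outer u v ** K ** outer w z) $ i $ j = ((v \<bullet> (K *v w)) *\<^sub>R outer u z) $ i $ j" for i j
  proof -
    have "(outer u v ** K ** outer w z) $ i $ j
        = (\<Sum>l\<in>UNIV. (\<Sum>m\<in>UNIV. u$i * v$m * K$m$l) * (w$l * z$j))"
      by (simp add: matrix_matrix_mult_def outer_def)
    also have "\<dots> = u$i * z$j * (\<Sum>m\<in>UNIV. v$m * (\<Sum>l\<in>UNIV. K$m$l * w$l))"
      by (simp add: sum_distrib_left sum_distrib_right mult_ac) (subst sum.swap, simp add: mult_ac)
    also have "\<dots> = ((v \<bullet> (K *v w)) *\<^sub>R outer u z) $ i $ j"
      by (simp add: outer_def inner_vec_def matrix_vector_mult_def mult_ac)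
    finally show ?thesis .
  qed
  then show ?thesis by (simp add: vec_eq_iff)
qed

lemma outer_sandwich_acoef:
  "outer xv xv ** (W ** matrix_inv (transpose V ** W) ** transpose V) ** outer xv xv
     = acoef V W xv *\<^sub>R outer xv xv"
  unfolding acoef_def by (simp only: outer_mult_mult_outer matrix_vector_mul_assoc)

lemma Bmat_mult_Bmat: "Bmat V W xv ** Bmat V W xv = acoef V W xv *\<^sub>R Bmat V W xv"
proof -
  have "Bmat V W xv ** Bmat V W xv = transpose V **
      (outer xv xv ** (W ** matrix_inv (transpose V ** W) ** transpose V) ** outer xv xv)
      ** W ** matrix_inv (transpose V ** W)"
    by (simp add: Bmat_def matrix_mul_assoc)
  then show ?thesis by (simp add: outer_sandwich_acoef Bmat_def matrix_algebra_simps)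
qed

lemma Cmat_mult_Bmat: "Cmat V Z W xv ** Bmat V W xv = acoef V W xv *\<^sub>R Cmat V Z W xv"
proof -
  have "Cmat V Z W xv ** Bmat V W xv = transpose Z **
      (outer xv xv ** (W ** matrix_inv (transpose V ** W) ** transpose V) ** outer xv xv)
      ** W ** matrix_inv (transpose V ** W)"
    by (simp add: Bmat_def Cmat_def matrix_mul_assoc)
  then show ?thesis by (simp add: outer_sandwich_acoef Cmat_def matrix_algebra_simps)
qed

lemma mat_1_add_scaleR_inverse:
  fixes B :: "real^'k^'k"
  assumes BB: "B ** B = a *\<^sub>R B" and ne: "1 + \<eta> * a \<noteq> 0"
  shows "(mat 1 + \<eta> *\<^sub>R B) ** (mat 1 - (\<eta> / (1 + \<eta> * a)) *\<^sub>R B) = mat 1"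
    and "(mat 1 - (\<eta> / (1 + \<eta> * a)) *\<^sub>R B) ** (mat 1 + \<eta> *\<^sub>R B) = mat 1"
proof -
  define c where "c = \<eta> / (1 + \<eta> * a)"
  have "\<eta> - c - \<eta> * c * a = 0"
    using ne by (simp add: c_def field_simps)
  moreover have "(mat 1 + \<eta> *\<^sub>R B) ** (mat 1 - c *\<^sub>R B) = mat 1 + (\<eta> - c - \<eta> * c * a) *\<^sub>R B"
    by (simp add: matrix_algebra_simps BB algebra_simps)
  ultimately show first: "(mat 1 + \<eta> *\<^sub>R B) ** (mat 1 - (\<eta> / (1 + \<eta> * a)) *\<^sub>R B) = mat 1"
    by (simp add: c_def)
  show "(mat 1 - (\<eta> / (1 + \<eta> * a)) *\<^sub>R B) ** (mat 1 + \<eta> *\<^sub>R B) = mat 1"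
    using first by (simp add: matrix_left_right_inverse)
qed

lemma oja_step_Ymat:
  fixes V W :: "real^'k^'n" and Z :: "real^'m^'n" and xv :: "real^'n" and \<eta> :: real
  defines "c \<equiv> \<eta> / (1 + \<eta> * acoef V W xv)"
  assumes inv: "invertible (transpose V ** W)" and ne: "1 + \<eta> * acoef V W xv \<noteq> 0"
  shows "invertible (transpose V ** ((mat 1 + \<eta> *\<^sub>R outer xv xv) ** W))"
    and "Ymat V Z ((mat 1 + \<eta> *\<^sub>R outer xv xv) ** W)
           = Ymat V Z W + c *\<^sub>R (Cmat V Z W xv - Ymat V Z W ** Bmat V W xv)"
proof -
  define M where "M = matrix_inv (transpose V ** W)"
  define B where "B = Bmat V W xv"
  define R where "R = mat 1 - c *\<^sub>R B"
  define W' where "W' = (mat 1 + \<eta> *\<^sub>R outer xv xv) ** W"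
  have M1: "transpose V ** W ** M = mat 1" and M2: "M ** (transpose V ** W) = mat 1"
    using matrix_inv_right[OF inv] matrix_inv_left[OF inv] by (simp_all add: M_def)
  have BB: "B ** B = acoef V W xv *\<^sub>R B" by (simp add: B_def Bmat_mult_Bmat)
  note R = mat_1_add_scaleR_inverse[OF BB ne, folded c_def R_def]
  have "B ** transpose V ** W = transpose V ** outer xv xv ** W"
    by (simp add: B_def Bmat_def M_def[symmetric] matrix_mul_assoc[symmetric] M2)
  then have VW': "transpose V ** W' = (mat 1 + \<eta> *\<^sub>R B) ** (transpose V ** W)"
    by (simp add: W'_def matrix_algebra_simps matrix_mul_assoc)
  have left: "transpose V ** W' ** (M ** R) = mat 1"
  proof -
    have "transpose V ** W' ** (M ** R) = (mat 1 + \<eta> *\<^sub>R B) ** (transpose V ** W ** M) ** R"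
      unfolding VW' by (simp only: matrix_mul_assoc)
    then show ?thesis using M1 R(1) by simp
  qed
  have right: "M ** R ** (transpose V ** W') = mat 1"
  proof -
    have "M ** R ** (transpose V ** W') = M ** (R ** (mat 1 + \<eta> *\<^sub>R B)) ** (transpose V ** W)"
      unfolding VW' by (simp only: matrix_mul_assoc)
    then show ?thesis using M2 R(2) by simp
  qed
  show "invertible (transpose V ** ((mat 1 + \<eta> *\<^sub>R outer xv xv) ** W))"
    using left right unfolding invertible_def W'_def by blast
  have "Ymat V Z W' = (Ymat V Z W + \<eta> *\<^sub>R Cmat V Z W xv) ** R"
    unfolding Ymat_def matrix_inv_unique[OF left right]
    by (simp add: W'_def Cmat_def M_def matrix_algebra_simps matrix_mul_assoc)
  also have "\<dots> = Ymat V Z W + c *\<^sub>R (Cmat V Z W xv - Ymat V Z W ** Bmat V W xv)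
      + (\<eta> - c - \<eta> * c * acoef V W xv) *\<^sub>R Cmat V Z W xv"
    by (simp add: R_def B_def matrix_algebra_simps Cmat_mult_Bmat algebra_simps)
  also have "\<eta> - c - \<eta> * c * acoef V W xv = 0"
    using ne by (simp add: c_def field_simps)
  finally show "Ymat V Z ((mat 1 + \<eta> *\<^sub>R outer xv xv) ** W)
           = Ymat V Z W + c *\<^sub>R (Cmat V Z W xv - Ymat V Z W ** Bmat V W xv)"
    by (simp add: W'_def)
qed

lemma norm_add_scaleR_diff_sq_le:
  fixes u p q :: "'a::real_inner"
  shows "(norm (u + c *\<^sub>R (p - q)))\<^sup>2
    \<le> (norm u)\<^sup>2 + 2 * c * (u \<bullet> p - u \<bullet> q) + 2 * c\<^sup>2 * ((norm q)\<^sup>2 + (norm p)\<^sup>2)"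
proof -
  have expand: "(norm (u + v))\<^sup>2 = (norm u)\<^sup>2 + 2 * (u \<bullet> v) + (norm v)\<^sup>2" for v
    unfolding power2_norm_eq_inner by (simp add: inner_add_left inner_add_right inner_commute[of v u])
  have "(norm (p - q))\<^sup>2 \<le> (norm p + norm q)\<^sup>2"
    by (simp add: norm_triangle_ineq4 power_mono)
  also have "\<dots> \<le> 2 * ((norm q)\<^sup>2 + (norm p)\<^sup>2)"
    using sum_squares_ge_zero[of "norm p - norm q" 0] by (simp add: power2_eq_square algebra_simps)
  finally have "c\<^sup>2 * (norm (p - q))\<^sup>2 \<le> c\<^sup>2 * (2 * ((norm q)\<^sup>2 + (norm p)\<^sup>2))"
    by (rule mult_left_mono) simp
  moreover have "(norm (c *\<^sub>R (p - q)))\<^sup>2 = c\<^sup>2 * (norm (p - q))\<^sup>2"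
    by (simp add: power_mult_distrib)
  ultimately show ?thesis
    unfolding expand[of "c *\<^sub>R (p - q)"] by (simp add: inner_diff_right algebra_simps)
qed

lemma trace_transpose_mult: "trace (transpose (A::real^'k^'m) ** B) = A \<bullet> B"
  by (simp add: trace_def transpose_def matrix_matrix_mult_def inner_vec_def) (subst sum.swap, simp)

lemma oja_step_norm_Ymat_le:
  fixes V W :: "real^'k^'n" and Z :: "real^'m^'n" and xv :: "real^'n" and \<eta> :: real
  defines "Y \<equiv> Ymat V Z W" and "B \<equiv> Bmat V W xv" and "C \<equiv> Cmat V Z W xv"
    and "a \<equiv> acoef V W xv"
    and "f1 \<equiv> trace (transpose (Ymat V Z W) ** Ymat V Z W ** Bmat V W xv)"
    and "f2 \<equiv> trace (transpose (Ymat V Z W) ** Cmat V Z W xv)"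
  assumes inv: "invertible (transpose V ** W)" and ne: "1 + \<eta> * a \<noteq> 0" and "0 \<le> \<eta>"
    and gap: "gap * (norm Y)\<^sup>2 \<le> e1 - e2"
  shows "(norm (Ymat V Z ((mat 1 + \<eta> *\<^sub>R outer xv xv) ** W)))\<^sup>2
    \<le> (1 - 2 * \<eta> * gap) * (norm Y)\<^sup>2
      + (2 * \<eta> * (- f1 + e1 + f2 - e2) + 2 * \<eta>\<^sup>2 * a / (1 + \<eta> * a) * (f1 - f2)
         + 2 * \<eta>\<^sup>2 / (1 + \<eta> * a)\<^sup>2 * ((norm (Y ** B))\<^sup>2 + (norm C)\<^sup>2))"
proof -
  define c where "c = \<eta> / (1 + \<eta> * a)"
  define k1 where "k1 = 2 * \<eta>\<^sup>2 * a / (1 + \<eta> * a)"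
  define k2 where "k2 = 2 * \<eta>\<^sup>2 / (1 + \<eta> * a)\<^sup>2"
  have "(norm (Ymat V Z ((mat 1 + \<eta> *\<^sub>R outer xv xv) ** W)))\<^sup>2 = (norm (Y + c *\<^sub>R (C - Y ** B)))\<^sup>2"
    unfolding oja_step_Ymat(2)[OF inv ne[unfolded a_def]] Y_def B_def C_def c_def a_def ..
  also have "\<dots> \<le> (norm Y)\<^sup>2 + 2 * c * (f2 - f1) + 2 * c\<^sup>2 * ((norm (Y ** B))\<^sup>2 + (norm C)\<^sup>2)"
    using norm_add_scaleR_diff_sq_le[of Y c C "Y ** B"]
    by (simp add: Y_def B_def C_def f1_def f2_def trace_transpose_mult flip: matrix_mul_assoc)
  also have "2 * c = 2 * \<eta> - k1"
    using ne by (simp add: k1_def c_def field_simps power2_eq_square)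
  also have "2 * c\<^sup>2 = k2"
    by (simp add: k2_def c_def power_divide)
  finally have step: "(norm (Ymat V Z ((mat 1 + \<eta> *\<^sub>R outer xv xv) ** W)))\<^sup>2
      \<le> (norm Y)\<^sup>2 + (2 * \<eta> - k1) * (f2 - f1) + k2 * ((norm (Y ** B))\<^sup>2 + (norm C)\<^sup>2)" .
  have "0 \<le> 2 * \<eta> * (e1 - e2 - gap * (norm Y)\<^sup>2)"
    using \<open>0 \<le> \<eta>\<close> gap by simp
  with step show ?thesis
    unfolding k1_def[symmetric] k2_def[symmetric] by (simp add: algebra_simps)
qed

section \<open>Expectations over the sample distribution\<close>

definition diag_mat :: "('k \<Rightarrow> real) \<Rightarrow> real^'k^'k" where
  "diag_mat l = (\<chi> i j. if i = j then l i else 0)"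

lemma matrix_mult_diag_mat_nth: "(A ** diag_mat l) $ i $ j = A $ i $ j * l j"
  by (simp add: matrix_matrix_mult_def diag_mat_def if_distrib if_distribR cong: if_cong)

lemma diag_mat_mult_nth: "(diag_mat l ** A) $ i $ j = l i * A $ i $ j"
  by (simp add: matrix_matrix_mult_def diag_mat_def if_distrib if_distribR cong: if_cong)

lemma second_moment_symmetric: "transpose (second_moment D) = second_moment D"
  by (simp add: transpose_def second_moment_def mult.commute vec_eq_iff)

lemma transpose_eigenvectors_mult:
  fixes S :: "real^'n^'n" and V :: "real^'k^'n"
  assumes sym: "transpose S = S" and eig: "\<And>j. S *v column j V = l j *\<^sub>R column j V"
  shows "transpose V ** S = diag_mat l ** transpose V"
proof -
  have "(transpose V ** S) $ j $ c = (S *v column j V) $ c" for j c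
    using arg_cong[OF sym, of "\<lambda>S. S $ c"]
    by (simp add: matrix_matrix_mult_def matrix_vector_mult_def transpose_def column_def
        vec_eq_iff mult.commute)
  also have "(S *v column j V) $ c = l j * V $ c $ j" for j c
    using arg_cong[OF eig[of j], of "\<lambda>v. v $ c"] by (simp add: column_def)
  also have "l j * V $ c $ j = (diag_mat l ** transpose V) $ j $ c" for j c
    by (simp add: diag_mat_mult_nth transpose_def)
  finally show ?thesis by (simp add: vec_eq_iff)
qed

lemma gap_norm_sq_le_trace_diff:
  fixes Y :: "real^'k^'m"
  assumes "\<And>i j. gap \<le> lV j - lZ i"
  shows "gap * (norm Y)\<^sup>2 \<le> trace (transpose Y ** Y ** diag_mat lV) - trace (transpose Y ** diag_mat lZ ** Y)"
proof -
  have "trace (transpose Y ** Y ** diag_mat lV) - trace (transpose Y ** diag_mat lZ ** Y)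
      = (\<Sum>i\<in>UNIV. \<Sum>j\<in>UNIV. (lV j - lZ i) * (Y$i$j)\<^sup>2)"
    by (simp add: trace_transpose_mult inner_vec_def matrix_mult_diag_mat_nth diag_mat_mult_nth
        flip: matrix_mul_assoc sum_subtractf)
       (simp add: power2_eq_square algebra_simps)
  moreover have "gap * (norm Y)\<^sup>2 = (\<Sum>i\<in>UNIV. \<Sum>j\<in>UNIV. gap * (Y$i$j)\<^sup>2)"
    unfolding power2_norm_eq_inner by (simp add: inner_vec_def sum_distrib_left power2_eq_square)
  moreover have "(\<Sum>i\<in>UNIV. \<Sum>j\<in>UNIV. gap * (Y$i$j)\<^sup>2) \<le> (\<Sum>i\<in>UNIV. \<Sum>j\<in>UNIV. (lV j - lZ i) * (Y$i$j)\<^sup>2)"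
    by (intro sum_mono mult_right_mono assms) simp
  ultimately show ?thesis by simp
qed

lemma integrable_nth_mult_nth:
  fixes D :: "(real^'n) measure"
  assumes "finite_measure D" "sets D = sets borel" "AE y in D. norm y \<le> 1"
  shows "integrable D (\<lambda>y. y$i * y$j)"
proof (rule finite_measure.integrable_const_bound[OF assms(1), where B=1])
  show "AE y in D. norm (y$i * y$j) \<le> 1"
    using assms(3)
  proof eventually_elim
    case (elim y)
    then have "\<bar>y$i\<bar> \<le> 1" "\<bar>y$j\<bar> \<le> 1"
      using component_le_norm_cart[of y] by (meson order_trans)+
    then show ?case by (simp add: abs_mult mult_le_one)
  qed
  show "(\<lambda>y. y$i * y$j) \<in> borel_measurable D"
    using assms(2) by (simp add: measurable_cong_sets[OF assms(2) refl])
qed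

lemma trace_mult_mult_eq_sum:
  fixes A :: "real^'n^'p" and M :: "real^'n^'n" and B :: "real^'p^'n"
  shows "trace (A ** M ** B) = (\<Sum>i\<in>UNIV. \<Sum>j\<in>UNIV. M$i$j * (B ** A)$j$i)"
proof -
  have "trace (A ** M ** B) = trace (M ** (B ** A))"
    by (metis matrix_mul_assoc trace_mul_sym)
  then show ?thesis by (simp add: trace_def matrix_matrix_mult_def)
qed

lemma
  fixes D :: "(real^'n) measure" and A :: "real^'n^'p" and B :: "real^'p^'n"
  assumes "finite_measure D" "sets D = sets borel" "AE y in D. norm y \<le> 1"
  shows integrable_trace_outer: "integrable D (\<lambda>y. trace (A ** outer y y ** B))"
    and integral_trace_outer: "(\<integral>y. trace (A ** outer y y ** B) \<partial>D) = trace (A ** second_moment D ** B)"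
proof -
  note int = integrable_nth_mult_nth[OF assms]
  show "integrable D (\<lambda>y. trace (A ** outer y y ** B))"
    unfolding trace_mult_mult_eq_sum outer_def
    by (intro Bochner_Integration.integrable_sum) (simp add: int)
  show "(\<integral>y. trace (A ** outer y y ** B) \<partial>D) = trace (A ** second_moment D ** B)"
    unfolding trace_mult_mult_eq_sum outer_def
    by (simp add: second_moment_def int Bochner_Integration.integral_sum)
qed

lemma trace_mult_Bmat:
  "trace (A ** Bmat V W y) = trace ((A ** transpose V) ** outer y y ** (W ** matrix_inv (transpose V ** W)))"
  by (simp only: Bmat_def matrix_mul_assoc)

lemma trace_mult_Cmat:
  "trace (A ** Cmat V Z W y) = trace ((A ** transpose Z) ** outer y y ** (W ** matrix_inv (transpose V ** W)))"
  by (simp only: Cmat_def matrix_mul_assoc)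

lemma integral_trace_mult_Bmat:
  fixes D :: "(real^'n) measure" and V W :: "real^'k^'n" and A :: "real^'k^'k"
  assumes D: "finite_measure D" "sets D = sets borel" "AE y in D. norm y \<le> 1"
    and inv: "invertible (transpose V ** W)"
    and VS: "transpose V ** second_moment D = diag_mat lV ** transpose V"
  shows "(\<integral>y. trace (A ** Bmat V W y) \<partial>D) = trace (A ** diag_mat lV)"
proof -
  have "(\<integral>y. trace (A ** Bmat V W y) \<partial>D)
      = trace (A ** (transpose V ** second_moment D) ** (W ** matrix_inv (transpose V ** W)))"
    unfolding trace_mult_Bmat integral_trace_outer[OF D] by (simp only: matrix_mul_assoc)
  also have "\<dots> = trace (A ** diag_mat lV ** (transpose V ** W ** matrix_inv (transpose V ** W)))"
    unfolding VS by (simp only: matrix_mul_assoc)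
  finally show ?thesis by (simp add: matrix_inv_right[OF inv])
qed

lemma integral_trace_mult_Cmat:
  fixes D :: "(real^'n) measure" and V W :: "real^'k^'n" and Z :: "real^'m^'n" and A :: "real^'m^'k"
  assumes D: "finite_measure D" "sets D = sets borel" "AE y in D. norm y \<le> 1"
    and ZS: "transpose Z ** second_moment D = diag_mat lZ ** transpose Z"
  shows "(\<integral>y. trace (A ** Cmat V Z W y) \<partial>D) = trace (A ** diag_mat lZ ** Ymat V Z W)"
proof -
  have "(\<integral>y. trace (A ** Cmat V Z W y) \<partial>D)
      = trace (A ** (transpose Z ** second_moment D) ** (W ** matrix_inv (transpose V ** W)))"
    unfolding trace_mult_Cmat integral_trace_outer[OF D] by (simp only: matrix_mul_assoc)
  then show ?thesis
    unfolding ZS Ymat_def by (simp only: matrix_mul_assoc)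
qed

section \<open>Conditional expectation given an independent sample\<close>

lemma (in prob_space) distr_Pair_indep_subalgebra:
  assumes sub: "subalgebra M F" and Q: "Q \<in> measurable F S" and X: "X \<in> measurable M T"
    and ind: "indep_set (sets F) (sigma_sets (space M) {X -` A \<inter> space M | A. A \<in> sets T})"
  shows "distr M S Q \<Otimes>\<^sub>M distr M T X = distr M (S \<Otimes>\<^sub>M T) (\<lambda>\<omega>. (Q \<omega>, X \<omega>))"
proof (rule pair_measure_eqI)
  have QM: "Q \<in> measurable M S" by (rule measurable_from_subalg[OF sub Q])
  show "sigma_finite_measure (distr M S Q)" "sigma_finite_measure (distr M T X)"
    by (intro prob_space_imp_sigma_finite prob_space_distr QM X)+
  show "sets (distr M S Q \<Otimes>\<^sub>M distr M T X) = sets (distr M (S \<Otimes>\<^sub>M T) (\<lambda>\<omega>. (Q \<omega>, X \<omega>)))"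
    by simp
  fix A B assume "A \<in> sets (distr M S Q)" "B \<in> sets (distr M T X)"
  then have A: "A \<in> sets S" and B: "B \<in> sets T" by auto
  have "Q -` A \<inter> space M \<in> sets F"
    using Q A sub by (auto simp: subalgebra_def measurable_def)
  moreover have "X -` B \<inter> space M \<in> sigma_sets (space M) {X -` A \<inter> space M | A. A \<in> sets T}"
    using B by blast
  ultimately have "prob ((Q -` A \<inter> space M) \<inter> (X -` B \<inter> space M))
      = prob (Q -` A \<inter> space M) * prob (X -` B \<inter> space M)"
    by (rule indep_setD[OF ind])
  moreover have "(\<lambda>\<omega>. (Q \<omega>, X \<omega>)) -` (A \<times> B) \<inter> space M = (Q -` A \<inter> space M) \<inter> (X -` B \<inter> space M)"
    by auto
  ultimately show "emeasure (distr M S Q) A * emeasure (distr M T X) B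
      = emeasure (distr M (S \<Otimes>\<^sub>M T) (\<lambda>\<omega>. (Q \<omega>, X \<omega>))) (A \<times> B)"
    using A B QM X by (simp add: emeasure_distr emeasure_eq_measure ennreal_mult)
qed

lemma (in prob_space) borel_measurable_nn_integral_distr:
  fixes X :: "'a \<Rightarrow> 'h::second_countable_topology"
  assumes X: "X \<in> borel_measurable M" and \<psi>: "case_prod \<psi> \<in> borel_measurable (borel \<Otimes>\<^sub>M borel)"
  shows "(\<lambda>g. \<integral>\<^sup>+y. \<psi> g y \<partial>distr M borel X) \<in> borel_measurable borel"
proof -
  interpret D: prob_space "distr M borel X" by (rule prob_space_distr) (rule X)
  show ?thesis
    using D.borel_measurable_nn_integral_fst[of "case_prod \<psi>"] \<psi>
    by (simp add: measurable_cong_sets[OF sets_pair_measure_cong[OF refl sets_distr] refl])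
qed

text \<open>Independence makes the joint law of \<open>(G, 1\<^sub>A, X)\<close> a product measure, so \<open>X\<close> can be
  integrated out first.\<close>
lemma (in prob_space) nn_set_integral_indep:
  fixes G :: "'a \<Rightarrow> 'g::second_countable_topology" and X :: "'a \<Rightarrow> 'h::second_countable_topology"
  assumes sub: "subalgebra M F" and G[measurable]: "G \<in> borel_measurable F"
    and X[measurable]: "X \<in> borel_measurable M"
    and ind: "indep_set (sets F) (sigma_sets (space M) {X -` A \<inter> space M | A. A \<in> sets borel})"
    and \<psi>: "case_prod \<psi> \<in> borel_measurable (borel \<Otimes>\<^sub>M borel)"
    and A[measurable]: "A \<in> sets F"
  shows "(\<integral>\<^sup>+\<omega>\<in>A. \<psi> (G \<omega>) (X \<omega>) \<partial>M) = (\<integral>\<^sup>+\<omega>\<in>A. (\<integral>\<^sup>+y. \<psi> (G \<omega>) y \<partial>distr M borel X) \<partial>M)"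
proof -
  interpret D: prob_space "distr M borel X" by (rule prob_space_distr) (rule X)
  have [measurable (raw)]: "(\<lambda>z. \<psi> (f z) (g z)) \<in> borel_measurable N"
    if "f \<in> borel_measurable N" "g \<in> borel_measurable N" for f :: "_ \<Rightarrow> 'g" and g :: "_ \<Rightarrow> 'h" and N
    using measurable_compose[OF measurable_Pair[OF that] \<psi>] by simp
  have \<psi>_section: "\<psi> g \<in> borel_measurable (distr M borel X)" for g
    using measurable_Pair2[OF \<psi>, of g] by (simp cong: measurable_cong_sets)
  note [measurable] = borel_measurable_nn_integral_distr[OF X \<psi>]
  define Q where "Q \<omega> = (G \<omega>, indicator A \<omega> :: real)" for \<omega>
  have QF: "Q \<in> measurable F (borel \<Otimes>\<^sub>M borel)" unfolding Q_def by measurable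
  have [measurable]: "Q \<in> measurable M (borel \<Otimes>\<^sub>M borel)" by (rule measurable_from_subalg[OF sub QF])
  define h where "h z = ennreal (snd (fst z)) * \<psi> (fst (fst z)) (snd z)" for z :: "('g \<times> real) \<times> 'h"
  have [measurable]: "h \<in> borel_measurable ((borel \<Otimes>\<^sub>M borel) \<Otimes>\<^sub>M borel)"
    unfolding h_def by measurable
  have "(\<integral>\<^sup>+\<omega>\<in>A. \<psi> (G \<omega>) (X \<omega>) \<partial>M) = (\<integral>\<^sup>+\<omega>. h (Q \<omega>, X \<omega>) \<partial>M)"
    by (intro nn_integral_cong) (auto simp: h_def Q_def indicator_def)
  also have "\<dots> = (\<integral>\<^sup>+z. h z \<partial>(distr M (borel \<Otimes>\<^sub>M borel) Q \<Otimes>\<^sub>M distr M borel X))"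
    unfolding distr_Pair_indep_subalgebra[OF sub QF X ind] by (simp add: nn_integral_distr)
  also have "\<dots> = (\<integral>\<^sup>+q. \<integral>\<^sup>+y. h (q, y) \<partial>distr M borel X \<partial>distr M (borel \<Otimes>\<^sub>M borel) Q)"
    by (rule D.nn_integral_fst[symmetric]) simp
  also have "\<dots> = (\<integral>\<^sup>+q. ennreal (snd q) * (\<integral>\<^sup>+y. \<psi> (fst q) y \<partial>distr M borel X)
      \<partial>distr M (borel \<Otimes>\<^sub>M borel) Q)"
    unfolding h_def by (intro nn_integral_cong) (simp add: nn_integral_cmult \<psi>_section)
  also have "\<dots> = (\<integral>\<^sup>+\<omega>. ennreal (snd (Q \<omega>)) * (\<integral>\<^sup>+y. \<psi> (fst (Q \<omega>)) y \<partial>distr M borel X) \<partial>M)"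
    by (rule nn_integral_distr) measurable
  also have "\<dots> = (\<integral>\<^sup>+\<omega>\<in>A. (\<integral>\<^sup>+y. \<psi> (G \<omega>) y \<partial>distr M borel X) \<partial>M)"
    by (intro nn_integral_cong) (auto simp: Q_def indicator_def)
  finally show ?thesis .
qed

lemma (in prob_space) nn_cond_exp_indep:
  fixes G :: "'a \<Rightarrow> 'g::second_countable_topology" and X :: "'a \<Rightarrow> 'h::second_countable_topology"
  assumes sub: "subalgebra M F" and G: "G \<in> borel_measurable F" and X: "X \<in> borel_measurable M"
    and ind: "indep_set (sets F) (sigma_sets (space M) {X -` A \<inter> space M | A. A \<in> sets borel})"
    and \<psi>: "case_prod \<psi> \<in> borel_measurable (borel \<Otimes>\<^sub>M borel)"
  shows "AE \<omega> in M. nn_cond_exp M F (\<lambda>\<omega>. \<psi> (G \<omega>) (X \<omega>)) \<omega> = (\<integral>\<^sup>+y. \<psi> (G \<omega>) y \<partial>distr M borel X)"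
proof -
  interpret F: finite_measure_subalgebra M F by unfold_locales (rule sub)
  have "(\<lambda>\<omega>. \<psi> (G \<omega>) (X \<omega>)) \<in> borel_measurable M"
    using measurable_compose[OF measurable_Pair[OF measurable_from_subalg[OF sub G] X] \<psi>] by simp
  moreover have "(\<lambda>\<omega>. \<integral>\<^sup>+y. \<psi> (G \<omega>) y \<partial>distr M borel X) \<in> borel_measurable F"
    using measurable_compose[OF G borel_measurable_nn_integral_distr[OF X \<psi>]] .
  ultimately have "AE \<omega> in M. (\<integral>\<^sup>+y. \<psi> (G \<omega>) y \<partial>distr M borel X) = nn_cond_exp M F (\<lambda>\<omega>. \<psi> (G \<omega>) (X \<omega>)) \<omega>"
    by (intro F.nn_cond_exp_charact nn_set_integral_indep[OF sub G X ind \<psi>])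
  then show ?thesis by auto
qed

text \<open>No integrability of the composed variable is assumed: \<^const>\<open>real_cond_exp\<close> is computed
  from the conditional expectations of its positive and negative parts.\<close>
lemma (in prob_space) real_cond_exp_indep:
  fixes G :: "'a \<Rightarrow> 'g::second_countable_topology" and X :: "'a \<Rightarrow> 'h::second_countable_topology"
  assumes sub: "subalgebra M F" and G: "G \<in> borel_measurable F" and X: "X \<in> borel_measurable M"
    and ind: "indep_set (sets F) (sigma_sets (space M) {X -` A \<inter> space M | A. A \<in> sets borel})"
    and \<phi>: "case_prod \<phi> \<in> borel_measurable (borel \<Otimes>\<^sub>M borel)"
    and int: "\<And>g. integrable (distr M borel X) (\<phi> g)"
  shows "AE \<omega> in M. real_cond_exp M F (\<lambda>\<omega>. \<phi> (G \<omega>) (X \<omega>)) \<omega> = (\<integral>y. \<phi> (G \<omega>) y \<partial>distr M borel X)"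
proof -
  have "case_prod (\<lambda>g y. ennreal (\<phi> g y)) \<in> borel_measurable (borel \<Otimes>\<^sub>M borel)"
    and "case_prod (\<lambda>g y. ennreal (- \<phi> g y)) \<in> borel_measurable (borel \<Otimes>\<^sub>M borel)"
    using \<phi> by (simp_all add: split_beta')
  from this[THEN nn_cond_exp_indep[OF sub G X ind]] show ?thesis
  proof eventually_elim
    case (elim \<omega>)
    then show ?case
      unfolding real_cond_exp_def using real_lebesgue_integral_def[OF int[of "G \<omega>"]] by simp
  qed
qed

lemma
  assumes "\<And>t. x t \<in> borel_measurable P"
  shows sets_gen_filt:
      "sets (gen_filt P x s) = sigma_sets (space P) {x i -` A \<inter> space P | i A. i \<in> {1..s} \<and> A \<in> sets borel}"
    and space_gen_filt: "space (gen_filt P x s) = space P"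
  unfolding gen_filt_def by (auto intro!: sets_measure_of space_measure_of_conv)

lemma subalgebra_gen_filt:
  assumes "\<And>t. x t \<in> borel_measurable P"
  shows "subalgebra P (gen_filt P x s)"
  unfolding subalgebra_def sets_gen_filt[OF assms] space_gen_filt[OF assms]
  by (auto intro!: sets.sigma_sets_subset measurable_sets assms)

lemma measurable_gen_filt:
  fixes x :: "nat \<Rightarrow> 'w \<Rightarrow> real^'n"
  assumes "\<And>t. x t \<in> borel_measurable P" and "i \<in> {1..s}"
  shows "x i \<in> borel_measurable (gen_filt P x s)"
proof (rule measurableI)
  fix A :: "(real^'n) set" assume "A \<in> sets borel"
  then show "x i -` A \<inter> space (gen_filt P x s) \<in> sets (gen_filt P x s)"
    unfolding sets_gen_filt[OF assms(1)] space_gen_filt[OF assms(1)] using assms(2) by blast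
qed (simp add: space_gen_filt[OF assms(1)])

lemma indep_set_gen_filt_Suc:
  assumes P: "prob_space P" and x: "\<And>t. x t \<in> borel_measurable P"
    and ind: "prob_space.indep_vars P (\<lambda>_. borel) x {1..}"
  shows "prob_space.indep_set P (sets (gen_filt P x s))
           (sigma_sets (space P) {x (Suc s) -` A \<inter> space P | A. A \<in> sets borel})"
proof -
  interpret prob_space P by (rule P)
  define E where "E i = {x i -` A \<inter> space P | A. A \<in> sets borel}" for i
  define I where "I b = (if b then {1..s} else {Suc s})" for b
  have "indep_sets E {1..}"
    using ind unfolding indep_vars_def2 E_def by blast
  then have "indep_sets E (\<Union>b. I b)"
    by (rule indep_sets_mono_index[rotated]) (auto simp: I_def)
  moreover have "Int_stable (E i)" for i
  proof (rule Int_stableI)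
    fix a b assume "a \<in> E i" "b \<in> E i"
    then obtain A B where "a = x i -` A \<inter> space P" "b = x i -` B \<inter> space P"
      and "A \<in> sets borel" "B \<in> sets borel"
      unfolding E_def by blast
    then show "a \<inter> b \<in> E i"
      unfolding E_def by (intro CollectI exI[of _ "A \<inter> B"]) auto
  qed
  moreover have "disjoint_family I"
    unfolding disjoint_family_on_def I_def by auto
  ultimately have collect: "indep_sets (\<lambda>b. sigma_sets (space P) (\<Union>i\<in>I b. E i)) UNIV"
    by (rule indep_sets_collect_sigma)
  have past: "(\<Union>i\<in>I True. E i) = {x i -` A \<inter> space P | i A. i \<in> {1..s} \<and> A \<in> sets borel}"
    unfolding I_def E_def if_True by blast
  have next_sample: "(\<Union>i\<in>I False. E i) = {x (Suc s) -` A \<inter> space P | A. A \<in> sets borel}"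
    unfolding I_def E_def by simp
  show ?thesis
    unfolding indep_set_def sets_gen_filt[OF x]
    by (rule indep_sets_mono_sets[OF collect]) (auto split: bool.split simp: past next_sample)
qed

lemma measurable_Wrv_gen_filt:
  assumes "\<And>t. x t \<in> borel_measurable P" and "s \<le> s'"
  shows "Wrv W0 eta x s \<in> borel_measurable (gen_filt P x s')"
  using assms(2)
proof (induction s)
  case 0
  then show ?case by (simp add: Wrv_def)
next
  case (Suc s)
  have [measurable]: "x (Suc s) \<in> borel_measurable (gen_filt P x s')"
    using Suc.prems by (intro measurable_gen_filt assms(1)) simp
  have [measurable]: "Wrv W0 eta x s \<in> borel_measurable (gen_filt P x s')"
    using Suc by simp
  have "Wrv W0 eta x (Suc s)
      = (\<lambda>\<omega>. (mat 1 + eta (Suc s) *\<^sub>R outer (x (Suc s) \<omega>) (x (Suc s) \<omega>)) ** Wrv W0 eta x s \<omega>)"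
    by (simp add: Wrv_def fun_eq_iff)
  then show ?case by simp
qed

lemma real_cond_exp_Wrv_sample:
  fixes x :: "nat \<Rightarrow> 'w \<Rightarrow> real^'n" and W0 :: "real^'k^'n"
    and \<phi> :: "real^'k^'n \<Rightarrow> real^'n \<Rightarrow> real"
  assumes P: "prob_space P" and x: "\<And>t. x t \<in> borel_measurable P"
    and ind: "prob_space.indep_vars P (\<lambda>_. borel) x {1..}" and "1 \<le> t"
    and \<phi>: "case_prod \<phi> \<in> borel_measurable (borel \<Otimes>\<^sub>M borel)"
    and int: "\<And>W. integrable (distr P borel (x t)) (\<phi> W)"
  shows "AE \<omega> in P. real_cond_exp P (gen_filt P x (t - 1)) (\<lambda>\<omega>. \<phi> (Wrv W0 eta x (t - 1) \<omega>) (x t \<omega>)) \<omega>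
           = (\<integral>y. \<phi> (Wrv W0 eta x (t - 1) \<omega>) y \<partial>distr P borel (x t))"
proof -
  obtain s where t: "t = Suc s" using \<open>1 \<le> t\<close> by (cases t) auto
  show ?thesis
    unfolding t diff_Suc_1
    by (rule prob_space.real_cond_exp_indep[OF P subalgebra_gen_filt[OF x]
          measurable_Wrv_gen_filt[OF x order_refl] x indep_set_gen_filt_Suc[OF P x ind] \<phi> int[unfolded t]])
qed

section \<open>The one-step bound\<close>

lemma real_cond_exp_trYYB:
  fixes D :: "(real^'n) measure" and x :: "nat \<Rightarrow> 'w \<Rightarrow> real^'n"
    and V W0 :: "real^'k^'n" and Z :: "real^'m^'n"
  assumes D: "finite_measure D" "sets D = sets borel" "AE y in D. norm y \<le> 1"
    and P: "prob_space P" and x: "\<And>t. x t \<in> borel_measurable P"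
    and ind: "prob_space.indep_vars P (\<lambda>_. borel) x {1..}"
    and x_distr: "distr P borel (x t) = D" and t: "1 \<le> t"
  shows "AE \<omega> in P. real_cond_exp P (gen_filt P x (t - 1)) (trYYB V Z W0 eta x t) \<omega>
    = (\<integral>y. trace (transpose (Ymat V Z (Wrv W0 eta x (t - 1) \<omega>)) ** Ymat V Z (Wrv W0 eta x (t - 1) \<omega>)
                   ** Bmat V (Wrv W0 eta x (t - 1) \<omega>) y) \<partial>D)"
proof -
  have meas: "(\<lambda>(W, y). trace (transpose (Ymat V Z W) ** Ymat V Z W ** Bmat V W y))
      \<in> borel_measurable (borel \<Otimes>\<^sub>M borel)"
    unfolding Ymat_def Bmat_def split_beta' by measurable
  have int: "integrable D (\<lambda>y. trace (A ** Bmat V W y))" for A W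
    unfolding trace_mult_Bmat by (rule integrable_trace_outer[OF D])
  show ?thesis
    using real_cond_exp_Wrv_sample[OF P x ind t meas, unfolded x_distr, OF int]
    by (simp add: trYYB_def[abs_def] Let_def)
qed

lemma real_cond_exp_trYC:
  fixes D :: "(real^'n) measure" and x :: "nat \<Rightarrow> 'w \<Rightarrow> real^'n"
    and V W0 :: "real^'k^'n" and Z :: "real^'m^'n"
  assumes D: "finite_measure D" "sets D = sets borel" "AE y in D. norm y \<le> 1"
    and ZS: "transpose Z ** second_moment D = diag_mat lamZ ** transpose Z"
    and P: "prob_space P" and x: "\<And>t. x t \<in> borel_measurable P"
    and ind: "prob_space.indep_vars P (\<lambda>_. borel) x {1..}"
    and x_distr: "distr P borel (x t) = D" and t: "1 \<le> t"
  shows "AE \<omega> in P. real_cond_exp P (gen_filt P x (t - 1)) (trYC V Z W0 eta x t) \<omega>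
    = trace (transpose (Ymat V Z (Wrv W0 eta x (t - 1) \<omega>)) ** diag_mat lamZ
             ** Ymat V Z (Wrv W0 eta x (t - 1) \<omega>))"
proof -
  have meas: "(\<lambda>(W, y). trace (transpose (Ymat V Z W) ** Cmat V Z W y))
      \<in> borel_measurable (borel \<Otimes>\<^sub>M borel)"
    unfolding Ymat_def Cmat_def split_beta' by measurable
  have int: "integrable D (\<lambda>y. trace (A ** Cmat V Z W y))" for A W
    unfolding trace_mult_Cmat by (rule integrable_trace_outer[OF D])
  show ?thesis
    using real_cond_exp_Wrv_sample[OF P x ind t meas, unfolded x_distr, OF int]
    by (simp add: trYC_def[abs_def] Let_def integral_trace_mult_Cmat[OF D ZS])
qed

lemma oja_step_bound:
  fixes D :: "(real^'n) measure" and P :: "'w measure" and x :: "nat \<Rightarrow> 'w \<Rightarrow> real^'n"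
    and V W0 :: "real^'k^'n" and Z :: "real^'m^'n"
  assumes D: "prob_space D" "sets D = sets borel" "AE y in D. norm y \<le> 1"
    and VS: "transpose V ** second_moment D = diag_mat lamV ** transpose V"
    and ZS: "transpose Z ** second_moment D = diag_mat lamZ ** transpose Z"
    and gap: "\<And>i j. gap \<le> lamV i - lamZ j"
    and P: "prob_space P" and x: "\<And>t. x t \<in> borel_measurable P"
    and ind: "prob_space.indep_vars P (\<lambda>_. borel) x {1..}"
    and x_distr: "distr P borel (x t) = D" and t: "1 \<le> t" and "0 \<le> eta t"
  shows "AE \<omega> in P.
           invertible (transpose V ** Wrv W0 eta x (t - 1) \<omega>)
           \<and> 1 + eta t * acoef V (Wrv W0 eta x (t - 1) \<omega>) (x t \<omega>) \<noteq> 0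
           \<longrightarrow> invertible (transpose V ** Wrv W0 eta x t \<omega>)
               \<and> Xrv V Z W0 eta x t \<omega>
                   \<le> (1 - 2 * eta t * gap) * Xrv V Z W0 eta x (t - 1) \<omega> + Nrv P V Z W0 eta x t \<omega>"
proof -
  interpret D: prob_space D by (rule D(1))
  note D' = D.finite_measure_axioms D(2,3)
  define G where "G = Wrv W0 eta x (t - 1)"
  define F where "F = gen_filt P x (t - 1)"
  from real_cond_exp_trYYB[OF D' P x ind x_distr t, where V = V and Z = Z and ?W0.0 = W0 and eta = eta,
      folded G_def F_def]
    real_cond_exp_trYC[OF D' ZS P x ind x_distr t, where V = V and ?W0.0 = W0 and eta = eta,
      folded G_def F_def]
  show ?thesis
  proof eventually_elim
    case (elim \<omega>)
    show ?case
    proof (intro impI conjI)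
      assume "invertible (transpose V ** Wrv W0 eta x (t - 1) \<omega>)
        \<and> 1 + eta t * acoef V (Wrv W0 eta x (t - 1) \<omega>) (x t \<omega>) \<noteq> 0"
      then have inv: "invertible (transpose V ** G \<omega>)" and ne: "1 + eta t * acoef V (G \<omega>) (x t \<omega>) \<noteq> 0"
        by (simp_all add: G_def)
      have W_t: "Wrv W0 eta x t \<omega> = (mat 1 + eta t *\<^sub>R outer (x t \<omega>) (x t \<omega>)) ** G \<omega>"
        using t by (cases t) (simp_all add: Wrv_def G_def)
      show "invertible (transpose V ** Wrv W0 eta x t \<omega>)"
        unfolding W_t by (rule oja_step_Ymat(1)[OF inv ne])
      have "gap * (norm (Ymat V Z (G \<omega>)))\<^sup>2
          \<le> real_cond_exp P F (trYYB V Z W0 eta x t) \<omega> - real_cond_exp P F (trYC V Z W0 eta x t) \<omega>"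
        unfolding elim integral_trace_mult_Bmat[OF D' inv VS]
        by (rule gap_norm_sq_le_trace_diff) (rule gap)
      from oja_step_norm_Ymat_le[OF inv ne \<open>0 \<le> eta t\<close> this]
      show "Xrv V Z W0 eta x t \<omega> \<le> (1 - 2 * eta t * gap) * Xrv V Z W0 eta x (t - 1) \<omega> + Nrv P V Z W0 eta x t \<omega>"
        unfolding Xrv_def Nrv_def trYYB_def trYC_def W_t by (simp add: Let_def G_def F_def)
    qed
  qed
qed

section \<open>Unrolling the recursion\<close>

lemma linear_recursion_unroll:
  fixes X N c :: "nat \<Rightarrow> real"
  assumes step: "\<And>t. T0 < t \<Longrightarrow> X t \<le> c t * X (t - 1) + N t"
    and pos: "\<And>t. T0 < t \<Longrightarrow> 0 < c t"
    and "T0 < t"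
  shows "X t \<le> (\<Prod>t'\<in>{T0+1..t}. c t') * (X T0 + (\<Sum>t'\<in>{T0+1..t}. N t' / (\<Prod>t''\<in>{T0+1..t'}. c t'')))"
  using \<open>T0 < t\<close>
proof (induction t)
  case 0
  then show ?case by simp
next
  case (Suc t)
  define \<gamma> where "\<gamma> t = (\<Prod>t'\<in>{T0+1..t}. c t')" for t
  define S where "S t = (\<Sum>t'\<in>{T0+1..t}. N t' / \<gamma> t')" for t
  have \<gamma>_pos: "0 < \<gamma> t" for t unfolding \<gamma>_def by (intro prod_pos) (simp add: pos)
  have IH: "X t \<le> \<gamma> t * (X T0 + S t)"
  proof (cases "T0 < t")
    case True
    then show ?thesis using Suc.IH by (simp add: \<gamma>_def S_def)
  next
    case False
    with Suc.prems have "t = T0" by simp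
    then show ?thesis by (simp add: \<gamma>_def S_def)
  qed
  have "T0 \<le> t" using Suc.prems by simp
  then have \<gamma>_Suc: "\<gamma> (Suc t) = \<gamma> t * c (Suc t)" and S_Suc: "S (Suc t) = S t + N (Suc t) / \<gamma> (Suc t)"
    by (simp_all add: \<gamma>_def S_def prod.nat_ivl_Suc' sum.nat_ivl_Suc' mult.commute)
  have "X (Suc t) \<le> c (Suc t) * X t + N (Suc t)"
    using step[OF Suc.prems] by simp
  also have "\<dots> \<le> c (Suc t) * (\<gamma> t * (X T0 + S t)) + N (Suc t)"
    using IH pos[OF Suc.prems] by simp
  also have "\<dots> = \<gamma> (Suc t) * (X T0 + S (Suc t))"
    using \<gamma>_pos[of t] pos[OF Suc.prems] unfolding S_Suc \<gamma>_Suc by (simp add: field_simps)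
  finally show ?case by (simp add: \<gamma>_def S_def)
qed

lemma AE_linear_recursion_unroll:
  fixes X N :: "nat \<Rightarrow> 'a \<Rightarrow> real" and c :: "nat \<Rightarrow> real"
  assumes step: "\<And>t. T0 < t \<Longrightarrow> AE \<omega> in M. Q t \<omega> \<longrightarrow> X t \<omega> \<le> c t * X (t - 1) \<omega> + N t \<omega>"
    and pos: "\<And>t. T0 < t \<Longrightarrow> 0 < c t"
  shows "AE \<omega> in M. (\<forall>t>T0. Q t \<omega>) \<longrightarrow> (\<forall>t>T0. X t \<omega> \<le> (\<Prod>t'\<in>{T0+1..t}. c t')
           * (X T0 \<omega> + (\<Sum>t'\<in>{T0+1..t}. N t' \<omega> / (\<Prod>t''\<in>{T0+1..t'}. c t''))))"
proof -
  have "AE \<omega> in M. \<forall>t>T0. Q t \<omega> \<longrightarrow> X t \<omega> \<le> c t * X (t - 1) \<omega> + N t \<omega>"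
  proof (unfold AE_all_countable, intro allI)
    fix t show "AE \<omega> in M. T0 < t \<longrightarrow> Q t \<omega> \<longrightarrow> X t \<omega> \<le> c t * X (t - 1) \<omega> + N t \<omega>"
      using step[of t] by (cases "T0 < t") simp_all
  qed
  then show ?thesis
  proof eventually_elim
    case (elim \<omega>)
    show ?case
      by (intro impI allI linear_recursion_unroll[where X = "\<lambda>t. X t \<omega>" and N = "\<lambda>t. N t \<omega>"])
        (use elim pos in auto)
  qed
qed

theorem mainTheorem6:
  fixes D :: "(real^'n::finite) measure"
    and P :: "'w measure"
    and x :: "nat \<Rightarrow> 'w \<Rightarrow> real^'n"
    and V :: "real^'k::finite^'n" and Z :: "real^'m::finite^'n"
    and lamV :: "'k \<Rightarrow> real" and lamZ :: "'m \<Rightarrow> real"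
    and W0 :: "real^'k^'n" and eta :: "nat \<Rightarrow> real"
  assumes dims: "CARD('k) + CARD('m) = CARD('n)"
    and D_prob: "prob_space D" and D_sets: "sets D = sets borel"
    and D_sphere: "AE y in D. norm y = 1"
    and V_orth: "transpose V ** V = mat 1"
    and Z_orth: "transpose Z ** Z = mat 1"
    and VZ_orth: "transpose V ** Z = 0"
    and V_eig: "\<And>j. second_moment D *v column j V = lamV j *\<^sub>R column j V"
    and Z_eig: "\<And>j. second_moment D *v column j Z = lamZ j *\<^sub>R column j Z"
    and order: "\<And>i j. lamZ j \<le> lamV i"
    and P_prob: "prob_space P"
    and x_meas: "\<And>t. x t \<in> borel_measurable P"
    and x_indep: "prob_space.indep_vars P (\<lambda>_. borel) x {1..}"
    and x_distr: "\<And>t. 1 \<le> t \<Longrightarrow> distr P borel (x t) = D"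
  defines "gap \<equiv> Min (range lamV) - Max (range lamZ)"
  shows
    "(\<forall>t. 1 \<le> t \<longrightarrow> 0 \<le> eta t \<longrightarrow>
        (AE \<omega> in P.
           invertible (transpose V ** Wrv W0 eta x (t - 1) \<omega>)
           \<and> 1 + eta t * acoef V (Wrv W0 eta x (t - 1) \<omega>) (x t \<omega>) \<noteq> 0
           \<longrightarrow> invertible (transpose V ** Wrv W0 eta x t \<omega>)
               \<and> Xrv V Z W0 eta x t \<omega>
                   \<le> (1 - 2 * eta t * gap) * Xrv V Z W0 eta x (t - 1) \<omega>
                     + Nrv P V Z W0 eta x t \<omega>))
     \<and>
     (\<forall>T0. (\<forall>t>T0. 0 \<le> eta t \<and> 0 < 1 - 2 * eta t * gap) \<longrightarrow>
        (AE \<omega> in P.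
           (\<forall>t>T0. invertible (transpose V ** Wrv W0 eta x (t - 1) \<omega>)
                   \<and> 1 + eta t * acoef V (Wrv W0 eta x (t - 1) \<omega>) (x t \<omega>) \<noteq> 0)
           \<longrightarrow> (\<forall>t>T0. Xrv V Z W0 eta x t \<omega>
                 \<le> (\<Prod>t'\<in>{T0+1..t}. 1 - 2 * eta t' * gap)
                   * (Xrv V Z W0 eta x T0 \<omega>
                      + (\<Sum>t'\<in>{T0+1..t}.
                           Nrv P V Z W0 eta x t' \<omega> / (\<Prod>t''\<in>{T0+1..t'}. 1 - 2 * eta t'' * gap))))))"
proof -
  have "Min (range lamV) \<le> lamV i" "lamZ j \<le> Max (range lamZ)" for i j
    by (rule Min_le Max_ge; simp)+
  then have gap_le: "gap \<le> lamV i - lamZ j" for i j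
    unfolding gap_def by (meson diff_mono)
  have D_ball: "AE y in D. norm y \<le> 1" using D_sphere by eventually_elim simp
  note step = oja_step_bound[OF D_prob D_sets D_ball
      transpose_eigenvectors_mult[OF second_moment_symmetric V_eig]
      transpose_eigenvectors_mult[OF second_moment_symmetric Z_eig]
      gap_le P_prob x_meas x_indep, where eta = eta]
  show ?thesis
  proof (intro conjI allI impI AE_linear_recursion_unroll)
    fix T0 t assume H: "\<forall>t>T0. 0 \<le> eta t \<and> 0 < 1 - 2 * eta t * gap" and "T0 < t"
    then show "0 < 1 - 2 * eta t * gap" by blast
    from H \<open>T0 < t\<close> have "1 \<le> t" "0 \<le> eta t" by auto
    from step[OF x_distr[OF this(1)] this] show "AE \<omega> in P.
        invertible (transpose V ** Wrv W0 eta x (t - 1) \<omega>)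
          \<and> 1 + eta t * acoef V (Wrv W0 eta x (t - 1) \<omega>) (x t \<omega>) \<noteq> 0
        \<longrightarrow> Xrv V Z W0 eta x t \<omega>
          \<le> (1 - 2 * eta t * gap) * Xrv V Z W0 eta x (t - 1) \<omega> + Nrv P V Z W0 eta x t \<omega>"
      by eventually_elim blast
  qed (rule step[OF x_distr], assumption+)
qed

end
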